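(* Let $A,B\in M_\ell(F)$ commute, $H_X=(A\ \ B)$, $H_Z=(B^T\ \ -A^T)$, and fix idempotents $E_A,F_A$ associated with $A$ and $E_B,F_B$ associated with $B$. Define $$H_X^{(L)}=\begin{pmatrix}A&B\\0&I-E_A\end{pmatrix},\quad H_X^{(R)}=\begin{pmatrix}A&B\\ I-E_B&0\end{pmatrix},\quad H_Z^{(L)}=\begin{pmatrix}B^T&-A^T\\ (I-F_A)^T&0\end{pmatrix},\quad H_Z^{(R)}=\begin{pmatrix}B^T&-A^T\\ 0&(I-F_B)^T\end{pmatrix}.$$ Then for each $\mu\in\{L,R\}$, $$d_Z\bigl(\mathrm{CSS}(H_X,H_Z)\bigr)=\min\Bigl\{d_Z\bigl(\mathrm{CSS}(H_X^{(\mu)},H_Z)\bigr),\ d_Z\bigl(\mathrm{CSS}(H_X,H_Z^{(\mu)})\bigr)\Bigr\}.$$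
   Context: $F=\mathbb F_q$ is a finite field. For $H_X,H_Z$ with $H_XH_Z^T=0$, $d_Z(\mathrm{CSS}(H_X,H_Z))=\min\{\mathrm{wgt}(c):c\in C_{H_X}^\perp\setminus C_{H_Z}\}$, where $C_H$ is the row space of $H$, $C_H^\perp$ its orthogonal complement, and the minimum of the empty set is $\infty$. Idempotents associated with $A$: any $E_A,F_A$ with $E_A^2=E_A$, $F_A^2=F_A$, $\mathrm{rank}E_A=\mathrm{rank}F_A=\mathrm{rank}A$, $E_AA=AF_A=A$; similarly $E_B,F_B$ for $B$. (All pairs of matrices above satisfy the CSS orthogonality condition.) *)

theory Defs
  imports "Jordan_Normal_Form.DL_Rank" "HOL-Library.Extended_Nat"
begin

definition hcat :: "'a::zero mat \<Rightarrow> 'a mat \<Rightarrow> 'a mat" where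
  "hcat A B = four_block_mat A B (0\<^sub>m 0 (dim_col A)) (0\<^sub>m 0 (dim_col B))"

definition rowsp :: "'a::field mat \<Rightarrow> 'a vec set" where
  "rowsp H = vec_space.row_space (dim_col H) H"

definition orth :: "nat \<Rightarrow> 'a::field vec set \<Rightarrow> 'a vec set" where
  "orth n C = {c \<in> carrier_vec n. \<forall>x\<in>C. x \<bullet> c = 0}"

definition wgt :: "'a::zero vec \<Rightarrow> nat" where
  "wgt c = card {i. i < dim_vec c \<and> c $ i \<noteq> 0}"

text \<open>Z-distance of CSS(HX,HZ); the infimum of the empty set is \<infinity>.\<close>
definition dZ :: "'a::field mat \<Rightarrow> 'a mat \<Rightarrow> enat" where
  "dZ HX HZ = (INF c \<in> orth (dim_col HX) (rowsp HX) - rowsp HZ. enat (wgt c))"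

definition assoc_idems :: "nat \<Rightarrow> 'a::field mat \<Rightarrow> 'a mat \<Rightarrow> 'a mat \<Rightarrow> bool" where
  "assoc_idems l E F A \<longleftrightarrow> E \<in> carrier_mat l l \<and> F \<in> carrier_mat l l \<and>
     E * E = E \<and> F * F = F \<and>
     vec_space.rank l E = vec_space.rank l A \<and> vec_space.rank l F = vec_space.rank l A \<and>
     E * A = A \<and> A * F = A"

end

theory Submission
  imports Defs
begin

text \<open>Let K be the kernel of H_X, so that the Z-logical operators are K - C_{H_Z}. Adding the rows
(0 | I - E_A) to H_X cuts K down to K' \<subseteq> K, while adding the rows ((I - F_A)^T | 0) to H_Z enlarges
C_{H_Z} to C'. Every vector of C' has the form (B y + (I - F_A) z, - A y), and (I - E_A) A = 0, so
K \<inter> C' \<subseteq> K'. Hence K - C_{H_Z} = (K' - C_{H_Z}) \<union> (K - C'), and the minimal weights split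
accordingly. The case R is the mirror image, using (I - E_B) B = 0.\<close>

lemma append_vec_eq_zero_iff:
  assumes "u \<in> carrier_vec n" "v \<in> carrier_vec m"
  shows "u @\<^sub>v v = 0\<^sub>v (n + m) \<longleftrightarrow> u = 0\<^sub>v n \<and> v = 0\<^sub>v m"
proof -
  have "0\<^sub>v (n + m) = (0\<^sub>v n :: 'a::zero vec) @\<^sub>v 0\<^sub>v m" by (rule eq_vecI) auto
  then show ?thesis using assms by simp
qed

lemma carrier_vec_append_cases:
  assumes "c \<in> carrier_vec (n + m)"
  obtains u v where "u \<in> carrier_vec n" "v \<in> carrier_vec m" "c = u @\<^sub>v v"
  using vec_first_last_append[OF assms] vec_first_carrier vec_last_carrier by metis

lemma carrier_vec_0_iff: "v \<in> carrier_vec 0 \<longleftrightarrow> v = 0\<^sub>v 0"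
  by auto

lemma zero_mat_mult_vec [simp]: "v \<in> carrier_vec n \<Longrightarrow> 0\<^sub>m r n *\<^sub>v v = 0\<^sub>v r"
  by (rule eq_vecI) (auto simp: scalar_prod_def)

lemma mult_mat_vec_zero [simp]: "M \<in> carrier_mat r n \<Longrightarrow> M *\<^sub>v 0\<^sub>v n = (0\<^sub>v r :: 'a::semiring_0 vec)"
  by (rule eq_vecI) (auto simp: scalar_prod_def)

lemma one_minus_mult_eq_zero_mat:
  fixes E M :: "'a::ring_1 mat"
  assumes "E \<in> carrier_mat n n" "M \<in> carrier_mat n m" "E * M = M"
  shows "(1\<^sub>m n - E) * M = 0\<^sub>m n m"
  using assms by (simp add: minus_mult_distrib_mat[of _ n n])

lemma rowsp_eq_range_transpose:
  fixes H :: "'a::field mat"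
  assumes "H \<in> carrier_mat r n"
  shows "rowsp H = {H\<^sup>T *\<^sub>v y | y. y \<in> carrier_vec r}"
  unfolding rowsp_def using vec_space.row_space_eq[OF assms] assms by auto

lemma orth_rowsp_eq_kernel:
  fixes H :: "'a::field mat"
  assumes H: "H \<in> carrier_mat r n"
  shows "orth n (rowsp H) = {c \<in> carrier_vec n. H *\<^sub>v c = 0\<^sub>v r}"
proof -
  have scalar_prod_transpose: "(H\<^sup>T *\<^sub>v y) \<bullet> c = y \<bullet> (H *\<^sub>v c)"
    if "c \<in> carrier_vec n" "y \<in> carrier_vec r" for c y
    using transpose_vec_mult_scalar[OF H that] by simp
  have orth_rowsp_iff: "c \<in> orth n (rowsp H) \<longleftrightarrow>
      c \<in> carrier_vec n \<and> (\<forall>y\<in>carrier_vec r. y \<bullet> (H *\<^sub>v c) = 0)" for c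
    unfolding orth_def rowsp_eq_range_transpose[OF H] by (auto simp: scalar_prod_transpose)
  have kernel: "H *\<^sub>v c = 0\<^sub>v r"
    if c: "c \<in> carrier_vec n" and o: "\<forall>y\<in>carrier_vec r. y \<bullet> (H *\<^sub>v c) = 0" for c
  proof (rule eq_vecI)
    fix i assume "i < dim_vec (0\<^sub>v r :: 'a vec)"
    then have i: "i < r" by simp
    have "(H *\<^sub>v c) $ i = unit_vec r i \<bullet> (H *\<^sub>v c)"
      using H c i by (intro scalar_prod_left_unit[symmetric]) auto
    then show "(H *\<^sub>v c) $ i = 0\<^sub>v r $ i" using o i by simp
  qed (use H in auto)
  show ?thesis
  proof (intro equalityI subsetI)
    fix c assume "c \<in> orth n (rowsp H)"
    then show "c \<in> {c \<in> carrier_vec n. H *\<^sub>v c = 0\<^sub>v r}"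
      by (simp add: orth_rowsp_iff kernel)
  next
    fix c assume "c \<in> {c \<in> carrier_vec n. H *\<^sub>v c = 0\<^sub>v r}"
    then show "c \<in> orth n (rowsp H)"
      by (simp add: orth_rowsp_iff)
  qed
qed

lemma kernel_four_block_mat:
  fixes A B C D :: "'a::field mat"
  assumes "A \<in> carrier_mat r m" "B \<in> carrier_mat r n"
    and "C \<in> carrier_mat r' m" "D \<in> carrier_mat r' n"
    and "u \<in> carrier_vec m" "v \<in> carrier_vec n"
  shows "u @\<^sub>v v \<in> orth (m + n) (rowsp (four_block_mat A B C D)) \<longleftrightarrow>
         A *\<^sub>v u + B *\<^sub>v v = 0\<^sub>v r \<and> C *\<^sub>v u + D *\<^sub>v v = 0\<^sub>v r'"
  using assms
  by (simp add: orth_rowsp_eq_kernel[of _ "r + r'"] four_block_mat_mult_vec append_vec_eq_zero_iff)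

lemma rowsp_four_block_mat:
  fixes A B C D :: "'a::field mat"
  assumes A: "A \<in> carrier_mat r m" and B: "B \<in> carrier_mat r n"
    and C: "C \<in> carrier_mat r' m" and D: "D \<in> carrier_mat r' n"
  shows "rowsp (four_block_mat A B C D) =
    {(A\<^sup>T *\<^sub>v y + C\<^sup>T *\<^sub>v z) @\<^sub>v (B\<^sup>T *\<^sub>v y + D\<^sup>T *\<^sub>v z) | y z.
      y \<in> carrier_vec r \<and> z \<in> carrier_vec r'}"
proof -
  have transpose_mult: "(four_block_mat A B C D)\<^sup>T *\<^sub>v (y @\<^sub>v z) =
      (A\<^sup>T *\<^sub>v y + C\<^sup>T *\<^sub>v z) @\<^sub>v (B\<^sup>T *\<^sub>v y + D\<^sup>T *\<^sub>v z)"
    if "y \<in> carrier_vec r" "z \<in> carrier_vec r'" for y z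
    using assms that by (simp add: transpose_four_block_mat four_block_mat_mult_vec)
  have "rowsp (four_block_mat A B C D) =
      {(four_block_mat A B C D)\<^sup>T *\<^sub>v y | y. y \<in> carrier_vec (r + r')}"
    using A D by (intro rowsp_eq_range_transpose) auto
  also have "\<dots> = {(four_block_mat A B C D)\<^sup>T *\<^sub>v (y @\<^sub>v z) | y z.
      y \<in> carrier_vec r \<and> z \<in> carrier_vec r'}"
    by (auto elim!: carrier_vec_append_cases)
  also have "\<dots> = {(A\<^sup>T *\<^sub>v y + C\<^sup>T *\<^sub>v z) @\<^sub>v (B\<^sup>T *\<^sub>v y + D\<^sup>T *\<^sub>v z) | y z.
      y \<in> carrier_vec r \<and> z \<in> carrier_vec r'}"
    by (metis (no_types, opaque_lifting) transpose_mult)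
  finally show ?thesis .
qed

lemma kernel_hcat:
  fixes A B :: "'a::field mat"
  assumes "A \<in> carrier_mat r m" "B \<in> carrier_mat r n"
    and "u \<in> carrier_vec m" "v \<in> carrier_vec n"
  shows "u @\<^sub>v v \<in> orth (m + n) (rowsp (hcat A B)) \<longleftrightarrow> A *\<^sub>v u + B *\<^sub>v v = 0\<^sub>v r"
proof -
  have "0\<^sub>m 0 m *\<^sub>v u + 0\<^sub>m 0 n *\<^sub>v v = (0\<^sub>v 0 :: 'a vec)" by (rule eq_vecI) auto
  then show ?thesis
    unfolding hcat_def using assms by (subst kernel_four_block_mat) auto
qed

lemma rowsp_hcat:
  fixes A B :: "'a::field mat"
  assumes "A \<in> carrier_mat r m" "B \<in> carrier_mat r n"
  shows "rowsp (hcat A B) = {(A\<^sup>T *\<^sub>v y) @\<^sub>v (B\<^sup>T *\<^sub>v y) | y. y \<in> carrier_vec r}"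
  unfolding hcat_def using assms
  by (fastforce simp: rowsp_four_block_mat[OF assms zero_carrier_mat zero_carrier_mat] carrier_vec_0_iff)

lemma orth_rowsp_four_block_mat:
  fixes A B C D :: "'a::field mat"
  assumes "A \<in> carrier_mat r m" "B \<in> carrier_mat r n"
    and "C \<in> carrier_mat r' m" "D \<in> carrier_mat r' n"
  shows "orth (m + n) (rowsp (four_block_mat A B C D)) =
    orth (m + n) (rowsp (hcat A B)) \<inter> orth (m + n) (rowsp (hcat C D))"
proof (rule Set.set_eqI)
  fix c
  show "c \<in> orth (m + n) (rowsp (four_block_mat A B C D)) \<longleftrightarrow>
      c \<in> orth (m + n) (rowsp (hcat A B)) \<inter> orth (m + n) (rowsp (hcat C D))"
  proof (cases "c \<in> carrier_vec (m + n)")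
    case True
    then obtain u v where "u \<in> carrier_vec m" "v \<in> carrier_vec n" "c = u @\<^sub>v v"
      by (rule carrier_vec_append_cases)
    then show ?thesis using assms by (simp add: kernel_four_block_mat kernel_hcat)
  qed (simp add: orth_def)
qed

lemma rowsp_hcat_subset_four_block_mat:
  fixes P Q R S :: "'a::field mat"
  assumes P: "P \<in> carrier_mat s m" and Q: "Q \<in> carrier_mat s n"
    and R: "R \<in> carrier_mat s' m" and S: "S \<in> carrier_mat s' n"
  shows "rowsp (hcat P Q) \<subseteq> rowsp (four_block_mat P Q R S)"
proof
  fix x assume "x \<in> rowsp (hcat P Q)"
  then obtain y where y: "y \<in> carrier_vec s" and x: "x = (P\<^sup>T *\<^sub>v y) @\<^sub>v (Q\<^sup>T *\<^sub>v y)"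
    by (auto simp: rowsp_hcat[OF P Q])
  have "x = (P\<^sup>T *\<^sub>v y + R\<^sup>T *\<^sub>v 0\<^sub>v s') @\<^sub>v (Q\<^sup>T *\<^sub>v y + S\<^sup>T *\<^sub>v 0\<^sub>v s')"
    using x y P Q R S by auto
  then show "x \<in> rowsp (four_block_mat P Q R S)"
    unfolding rowsp_four_block_mat[OF P Q R S] using y zero_carrier_vec by blast
qed

lemma rowsp_four_block_mat_subset_orth:
  fixes C D P Q R S :: "'a::field mat"
  assumes C: "C \<in> carrier_mat r m" and D: "D \<in> carrier_mat r n"
    and P: "P \<in> carrier_mat s m" and Q: "Q \<in> carrier_mat s n"
    and R: "R \<in> carrier_mat s' m" and S: "S \<in> carrier_mat s' n"
    and orth_PQ: "C * P\<^sup>T + D * Q\<^sup>T = 0\<^sub>m r s"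
    and orth_RS: "C * R\<^sup>T + D * S\<^sup>T = 0\<^sub>m r s'"
  shows "rowsp (four_block_mat P Q R S) \<subseteq> orth (m + n) (rowsp (hcat C D))"
proof
  fix c assume "c \<in> rowsp (four_block_mat P Q R S)"
  then obtain y z where y: "y \<in> carrier_vec s" and z: "z \<in> carrier_vec s'"
    and c: "c = (P\<^sup>T *\<^sub>v y + R\<^sup>T *\<^sub>v z) @\<^sub>v (Q\<^sup>T *\<^sub>v y + S\<^sup>T *\<^sub>v z)"
    by (auto simp: rowsp_four_block_mat[OF P Q R S])
  let ?u = "P\<^sup>T *\<^sub>v y + R\<^sup>T *\<^sub>v z" and ?v = "Q\<^sup>T *\<^sub>v y + S\<^sup>T *\<^sub>v z"
  have uv: "?u \<in> carrier_vec m" "?v \<in> carrier_vec n" using P Q R S y z by auto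
  have "C *\<^sub>v ?u + D *\<^sub>v ?v = (C * P\<^sup>T + D * Q\<^sup>T) *\<^sub>v y + (C * R\<^sup>T + D * S\<^sup>T) *\<^sub>v z"
    using C D P Q R S y z
    by (simp add: mult_add_distrib_mat_vec[of _ r m] mult_add_distrib_mat_vec[of _ r n]
        add_mult_distrib_mat_vec[of _ r s] add_mult_distrib_mat_vec[of _ r s'])
      (rule eq_vecI; auto simp: ac_simps)
  also have "\<dots> = 0\<^sub>v r" using y z by (simp add: orth_PQ orth_RS)
  finally show "c \<in> orth (m + n) (rowsp (hcat C D))"
    using uv C D by (simp add: c kernel_hcat)
qed

lemma dZ_eq_min_refinements:
  fixes HX HX' HZ HZ' :: "'a::field mat"
  assumes "dim_col HX' = dim_col HX"
    and "orth (dim_col HX) (rowsp HX') \<subseteq> orth (dim_col HX) (rowsp HX)"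
    and "rowsp HZ \<subseteq> rowsp HZ'"
    and "orth (dim_col HX) (rowsp HX) \<inter> rowsp HZ' \<subseteq> orth (dim_col HX) (rowsp HX')"
  shows "dZ HX HZ = min (dZ HX' HZ) (dZ HX HZ')"
proof -
  let ?K = "orth (dim_col HX) (rowsp HX)" and ?K' = "orth (dim_col HX) (rowsp HX')"
  have "?K - rowsp HZ = (?K' - rowsp HZ) \<union> (?K - rowsp HZ')"
    using assms by blast
  then show ?thesis unfolding dZ_def assms(1) by (simp add: INF_union inf_min)
qed

lemma dZ_eq_min_four_block:
  fixes A B C D P Q R S :: "'a::field mat"
  assumes "A \<in> carrier_mat r m" "B \<in> carrier_mat r n"
    and "C \<in> carrier_mat r' m" "D \<in> carrier_mat r' n"
    and "P \<in> carrier_mat s m" "Q \<in> carrier_mat s n"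
    and "R \<in> carrier_mat s' m" "S \<in> carrier_mat s' n"
    and "C * P\<^sup>T + D * Q\<^sup>T = 0\<^sub>m r' s"
    and "C * R\<^sup>T + D * S\<^sup>T = 0\<^sub>m r' s'"
  shows "dZ (hcat A B) (hcat P Q) =
    min (dZ (four_block_mat A B C D) (hcat P Q)) (dZ (hcat A B) (four_block_mat P Q R S))"
proof (rule dZ_eq_min_refinements)
  have dim: "dim_col (hcat A B) = m + n" "dim_col (four_block_mat A B C D) = m + n"
    unfolding hcat_def using assms by auto
  then show "dim_col (four_block_mat A B C D) = dim_col (hcat A B)" by simp
  show "orth (dim_col (hcat A B)) (rowsp (four_block_mat A B C D)) \<subseteq>
      orth (dim_col (hcat A B)) (rowsp (hcat A B))"
    "orth (dim_col (hcat A B)) (rowsp (hcat A B)) \<inter> rowsp (four_block_mat P Q R S) \<subseteq>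
      orth (dim_col (hcat A B)) (rowsp (four_block_mat A B C D))"
    using rowsp_four_block_mat_subset_orth[of C r' m D n P s Q R s' S] assms
    by (auto simp: dim orth_rowsp_four_block_mat[of A r m B n C r' D])
  show "rowsp (hcat P Q) \<subseteq> rowsp (four_block_mat P Q R S)"
    using assms by (intro rowsp_hcat_subset_four_block_mat)
qed

theorem mainTheorem7:
  fixes A B EA FA EB FB :: "'a::{finite,field} mat" and l :: nat
  assumes "A \<in> carrier_mat l l" and "B \<in> carrier_mat l l"
    and "A * B = B * A"
    and "assoc_idems l EA FA A" and "assoc_idems l EB FB B"
  defines "HX \<equiv> hcat A B"
    and "HZ \<equiv> hcat B\<^sup>T (- A\<^sup>T)"
    and "HXL \<equiv> four_block_mat A B (0\<^sub>m l l) (1\<^sub>m l - EA)"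
    and "HXR \<equiv> four_block_mat A B (1\<^sub>m l - EB) (0\<^sub>m l l)"
    and "HZL \<equiv> four_block_mat B\<^sup>T (- A\<^sup>T) (1\<^sub>m l - FA)\<^sup>T (0\<^sub>m l l)"
    and "HZR \<equiv> four_block_mat B\<^sup>T (- A\<^sup>T) (0\<^sub>m l l) (1\<^sub>m l - FB)\<^sup>T"
  shows "dZ HX HZ = min (dZ HXL HZ) (dZ HX HZL) \<and>
         dZ HX HZ = min (dZ HXR HZ) (dZ HX HZR)"
proof
  from assms(4) have EA: "EA \<in> carrier_mat l l" "FA \<in> carrier_mat l l" "EA * A = A"
    unfolding assoc_idems_def by auto
  from assms(5) have EB: "EB \<in> carrier_mat l l" "FB \<in> carrier_mat l l" "EB * B = B"
    unfolding assoc_idems_def by auto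
  have kill_A: "(1\<^sub>m l - EA) * A = 0\<^sub>m l l" and kill_B: "(1\<^sub>m l - EB) * B = 0\<^sub>m l l"
    using assms(1,2) EA EB by (simp_all add: one_minus_mult_eq_zero_mat)
  show "dZ HX HZ = min (dZ HXL HZ) (dZ HX HZL)"
    unfolding HX_def HZ_def HXL_def HZL_def
    by (rule dZ_eq_min_four_block[where r = l and r' = l and s = l and s' = l and m = l and n = l])
      (use assms(1,2) EA kill_A in \<open>auto simp: transpose_uminus\<close>)
  show "dZ HX HZ = min (dZ HXR HZ) (dZ HX HZR)"
    unfolding HX_def HZ_def HXR_def HZR_def
    by (rule dZ_eq_min_four_block[where r = l and r' = l and s = l and s' = l and m = l and n = l])
      (use assms(1,2) EB kill_B in \<open>auto simp: transpose_uminus\<close>)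
qed

end
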